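(* Let $S$ be a semigroup with a subsemigroup $T$ such that $S\setminus T$ is an ideal of $S$. (1) If $S$ is right ideal Howson then so is $T$. (2) If moreover $S\setminus T$ is finite, then $S$ is right ideal Howson if and only if $T$ is right ideal Howson.
   Context: A semigroup $S$ is right ideal Howson if the intersection of any two finitely generated right ideals of $S$ is finitely generated, where a right ideal $I$ is finitely generated if $I=XS^1$ for a finite $X\subseteq I$ ($S^1$ being $S$ if $S$ is a monoid and otherwise $S$ with an identity adjoined). *)

theory Defs
  imports Main
begin

definition semigroup_on :: "'a set \<Rightarrow> ('a \<Rightarrow> 'a \<Rightarrow> 'a) \<Rightarrow> bool" where
  "semigroup_on S f \<longleftrightarrow>
     (\<forall>x\<in>S. \<forall>y\<in>S. f x y \<in> S) \<and>
     (\<forall>x\<in>S. \<forall>y\<in>S. \<forall>z\<in>S. f (f x y) z = f x (f y z))"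

definition subsemigroup :: "'a set \<Rightarrow> 'a set \<Rightarrow> ('a \<Rightarrow> 'a \<Rightarrow> 'a) \<Rightarrow> bool" where
  "subsemigroup T S f \<longleftrightarrow> T \<subseteq> S \<and> (\<forall>x\<in>T. \<forall>y\<in>T. f x y \<in> T)"

definition right_ideal :: "'a set \<Rightarrow> ('a \<Rightarrow> 'a \<Rightarrow> 'a) \<Rightarrow> 'a set \<Rightarrow> bool" where
  "right_ideal S f I \<longleftrightarrow> I \<subseteq> S \<and> (\<forall>x\<in>I. \<forall>s\<in>S. f x s \<in> I)"

definition ideal_of :: "'a set \<Rightarrow> ('a \<Rightarrow> 'a \<Rightarrow> 'a) \<Rightarrow> 'a set \<Rightarrow> bool" where
  "ideal_of S f I \<longleftrightarrow> I \<subseteq> S \<and> (\<forall>x\<in>I. \<forall>s\<in>S. f x s \<in> I \<and> f s x \<in> I)"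

text \<open>X S^1 = X \<union> X S (this is also correct when S is a monoid, since then X \<subseteq> X S).\<close>
definition gen_right_ideal :: "'a set \<Rightarrow> ('a \<Rightarrow> 'a \<Rightarrow> 'a) \<Rightarrow> 'a set \<Rightarrow> 'a set" where
  "gen_right_ideal S f X = X \<union> {f x s | x s. x \<in> X \<and> s \<in> S}"

definition fg_right_ideal :: "'a set \<Rightarrow> ('a \<Rightarrow> 'a \<Rightarrow> 'a) \<Rightarrow> 'a set \<Rightarrow> bool" where
  "fg_right_ideal S f I \<longleftrightarrow> right_ideal S f I \<and>
     (\<exists>X. finite X \<and> X \<subseteq> I \<and> I = gen_right_ideal S f X)"

definition right_ideal_Howson :: "'a set \<Rightarrow> ('a \<Rightarrow> 'a \<Rightarrow> 'a) \<Rightarrow> bool" where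
  "right_ideal_Howson S f \<longleftrightarrow>
     (\<forall>I J. fg_right_ideal S f I \<and> fg_right_ideal S f J \<longrightarrow> fg_right_ideal S f (I \<inter> J))"

end

theory Submission
  imports Defs
begin

text \<open>Since \<open>S - T\<close> is an ideal, a product \<open>x s\<close> with \<open>x, s \<in> S\<close> lies in \<open>T\<close> only if
  \<open>x, s \<in> T\<close>; hence \<open>X S\<^sup>1 \<inter> T = (X \<inter> T) T\<^sup>1\<close>. Every finitely generated right ideal of \<open>T\<close>
  is thus the trace on \<open>T\<close> of a finitely generated right ideal of \<open>S\<close>, and traces of finitely
  generated right ideals of \<open>S\<close> are finitely generated in \<open>T\<close>; this transfers the Howson
  property from \<open>S\<close> to \<open>T\<close>. Conversely, a right ideal of \<open>S\<close> is generated by a generating set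
  of its trace on \<open>T\<close> together with its part outside \<open>T\<close>, which is finite when \<open>S - T\<close> is.\<close>

lemma gen_right_ideal_superset: "X \<subseteq> gen_right_ideal S f X"
  unfolding gen_right_ideal_def by (rule Un_upper1)

lemma right_ideal_Int:
  "right_ideal S f I \<Longrightarrow> right_ideal S f J \<Longrightarrow> right_ideal S f (I \<inter> J)"
  unfolding right_ideal_def by blast

lemma right_ideal_gen_right_ideal:
  assumes S: "semigroup_on S f" and X: "X \<subseteq> S"
  shows "right_ideal S f (gen_right_ideal S f X)"
  unfolding right_ideal_def
proof (intro conjI ballI)
  show "gen_right_ideal S f X \<subseteq> S"
    using S X unfolding gen_right_ideal_def semigroup_on_def by blast
next
  fix y s assume y: "y \<in> gen_right_ideal S f X" and s: "s \<in> S"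
  show "f y s \<in> gen_right_ideal S f X"
  proof (cases "y \<in> X")
    case True
    then show ?thesis using s unfolding gen_right_ideal_def by blast
  next
    case False
    then obtain x t where y_eq: "y = f x t" and "x \<in> X" "t \<in> S"
      using y unfolding gen_right_ideal_def by blast
    moreover from \<open>x \<in> X\<close> \<open>t \<in> S\<close> have "f y s = f x (f t s)" "f t s \<in> S"
      using S X s y_eq unfolding semigroup_on_def by blast+
    ultimately show ?thesis unfolding gen_right_ideal_def by blast
  qed
qed

lemma fg_right_ideal_gen_right_ideal:
  assumes "semigroup_on S f" "finite X" "X \<subseteq> S"
  shows "fg_right_ideal S f (gen_right_ideal S f X)"
  unfolding fg_right_ideal_def
  using assms right_ideal_gen_right_ideal[OF assms(1,3)] gen_right_ideal_superset[of X S f]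
  by blast

lemma gen_right_ideal_Int_subsemigroup:
  assumes T: "subsemigroup T S f" and ideal: "ideal_of S f (S - T)" and X: "X \<subseteq> S"
  shows "gen_right_ideal S f X \<inter> T = gen_right_ideal T f (X \<inter> T)"
proof
  show "gen_right_ideal S f X \<inter> T \<subseteq> gen_right_ideal T f (X \<inter> T)"
  proof
    fix y assume y: "y \<in> gen_right_ideal S f X \<inter> T"
    show "y \<in> gen_right_ideal T f (X \<inter> T)"
    proof (cases "y \<in> X")
      case True
      then show ?thesis using y unfolding gen_right_ideal_def by auto
    next
      case False
      then obtain x s where "y = f x s" "x \<in> X" "s \<in> S"
        using y unfolding gen_right_ideal_def by auto
      moreover from this have "x \<in> T" "s \<in> T"
        using ideal X y unfolding ideal_of_def by auto
      ultimately show ?thesis unfolding gen_right_ideal_def by auto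
    qed
  qed
next
  show "gen_right_ideal T f (X \<inter> T) \<subseteq> gen_right_ideal S f X \<inter> T"
    using T unfolding gen_right_ideal_def subsemigroup_def by blast
qed

lemma fg_right_ideal_Int_subsemigroup:
  assumes T: "subsemigroup T S f" and ideal: "ideal_of S f (S - T)"
    and I: "fg_right_ideal S f I"
  shows "fg_right_ideal T f (I \<inter> T)"
proof -
  obtain X where X: "finite X" "X \<subseteq> I" "I = gen_right_ideal S f X" and "right_ideal S f I"
    using I unfolding fg_right_ideal_def by blast
  then have "X \<subseteq> S" "right_ideal T f (I \<inter> T)"
    using T unfolding right_ideal_def subsemigroup_def by blast+
  moreover have "I \<inter> T = gen_right_ideal T f (X \<inter> T)"
    using gen_right_ideal_Int_subsemigroup[OF T ideal \<open>X \<subseteq> S\<close>] X(3) by simp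
  ultimately show ?thesis
    unfolding fg_right_ideal_def using X(1,2) by blast
qed

lemma fg_right_ideal_subsemigroup_extends:
  assumes S: "semigroup_on S f" and T: "subsemigroup T S f" and ideal: "ideal_of S f (S - T)"
    and I: "fg_right_ideal T f I"
  obtains I' where "fg_right_ideal S f I'" "I = I' \<inter> T"
proof -
  obtain X where X: "finite X" "X \<subseteq> I" "I = gen_right_ideal T f X" and "right_ideal T f I"
    using I unfolding fg_right_ideal_def by blast
  then have "X \<subseteq> T" unfolding right_ideal_def by blast
  with T have "X \<subseteq> S" unfolding subsemigroup_def by blast
  have "I = gen_right_ideal S f X \<inter> T"
    using gen_right_ideal_Int_subsemigroup[OF T ideal \<open>X \<subseteq> S\<close>] X(3) \<open>X \<subseteq> T\<close>
    by (simp add: Int_absorb2)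
  with fg_right_ideal_gen_right_ideal[OF S X(1) \<open>X \<subseteq> S\<close>] show thesis by (rule that)
qed

lemma fg_right_ideal_if_fg_Int_subsemigroup:
  assumes T: "subsemigroup T S f" and I: "right_ideal S f I"
    and I_T: "fg_right_ideal T f (I \<inter> T)" and fin: "finite (I - T)"
  shows "fg_right_ideal S f I"
proof -
  obtain Z where Z: "finite Z" "Z \<subseteq> I \<inter> T" "I \<inter> T = gen_right_ideal T f Z"
    using I_T unfolding fg_right_ideal_def by blast
  define W where "W = Z \<union> (I - T)"
  have "W \<subseteq> I" unfolding W_def using Z(2) by blast
  have "I = gen_right_ideal S f W"
  proof
    show "gen_right_ideal S f W \<subseteq> I"
      using \<open>W \<subseteq> I\<close> I unfolding gen_right_ideal_def right_ideal_def by blast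
    show "I \<subseteq> gen_right_ideal S f W"
    proof
      fix y assume "y \<in> I"
      show "y \<in> gen_right_ideal S f W"
      proof (cases "y \<in> T")
        case True
        then have "y \<in> gen_right_ideal T f Z" using Z(3) \<open>y \<in> I\<close> by blast
        then show ?thesis
          using T unfolding gen_right_ideal_def W_def subsemigroup_def by blast
      next
        case False
        then show ?thesis using \<open>y \<in> I\<close> unfolding gen_right_ideal_def W_def by blast
      qed
    qed
  qed
  moreover have "finite W" unfolding W_def using Z(1) fin by simp
  ultimately show ?thesis
    unfolding fg_right_ideal_def using I \<open>W \<subseteq> I\<close> by blast
qed

lemma right_ideal_Howson_subsemigroup:
  assumes S: "semigroup_on S f" and T: "subsemigroup T S f" and ideal: "ideal_of S f (S - T)"
    and howson: "right_ideal_Howson S f"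
  shows "right_ideal_Howson T f"
  unfolding right_ideal_Howson_def
proof (intro allI impI, elim conjE)
  fix I J assume I: "fg_right_ideal T f I" and J: "fg_right_ideal T f J"
  obtain I' where I': "fg_right_ideal S f I'" "I = I' \<inter> T"
    using fg_right_ideal_subsemigroup_extends[OF S T ideal I] .
  obtain J' where J': "fg_right_ideal S f J'" "J = J' \<inter> T"
    using fg_right_ideal_subsemigroup_extends[OF S T ideal J] .
  have "fg_right_ideal S f (I' \<inter> J')"
    using howson I'(1) J'(1) unfolding right_ideal_Howson_def by blast
  from fg_right_ideal_Int_subsemigroup[OF T ideal this]
  show "fg_right_ideal T f (I \<inter> J)"
    using I'(2) J'(2) by (simp add: Int_ac)
qed

lemma right_ideal_Howson_from_subsemigroup:
  assumes T: "subsemigroup T S f" and ideal: "ideal_of S f (S - T)"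
    and fin: "finite (S - T)" and howson: "right_ideal_Howson T f"
  shows "right_ideal_Howson S f"
  unfolding right_ideal_Howson_def
proof (intro allI impI, elim conjE)
  fix I J assume I: "fg_right_ideal S f I" and J: "fg_right_ideal S f J"
  have IJ: "right_ideal S f (I \<inter> J)"
    using I J right_ideal_Int unfolding fg_right_ideal_def by blast
  moreover have "fg_right_ideal T f (I \<inter> T \<inter> (J \<inter> T))"
    using howson fg_right_ideal_Int_subsemigroup[OF T ideal I]
      fg_right_ideal_Int_subsemigroup[OF T ideal J]
    unfolding right_ideal_Howson_def by blast
  then have "fg_right_ideal T f (I \<inter> J \<inter> T)"
    by (simp add: Int_ac)
  moreover have "finite (I \<inter> J - T)"
    using IJ fin finite_subset unfolding right_ideal_def by (metis Diff_mono order_refl)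
  ultimately show "fg_right_ideal S f (I \<inter> J)"
    by (rule fg_right_ideal_if_fg_Int_subsemigroup[OF T])
qed

theorem mainTheorem18:
  fixes S T :: "'a set" and f :: "'a \<Rightarrow> 'a \<Rightarrow> 'a"
  assumes "semigroup_on S f"
    and "subsemigroup T S f"
    and "ideal_of S f (S - T)"
  shows "(right_ideal_Howson S f \<longrightarrow> right_ideal_Howson T f) \<and>
         (finite (S - T) \<longrightarrow> (right_ideal_Howson S f \<longleftrightarrow> right_ideal_Howson T f))"
  using right_ideal_Howson_subsemigroup[OF assms]
    right_ideal_Howson_from_subsemigroup[OF assms(2,3)] by blast

end
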